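(* For every environment $\omega$, $n=l+m$, $x=-l+m$ with $l,m\ge 0$, $$P^{\omega}_n(X_n=x)=P^{\mathbf 0}_n(X_n=x)+\tfrac12\{p^{(H)}_n(l,m)^2-q^{(H)}_n(l,m)^2\}\sin(\omega_0)$$ $$\quad-\frac{r^{(H)}_n(l,m)}{2}\Big[p^{(H)}_n(l,m)\,\Im\big((1+e^{2i\omega_0})\Theta^{(p)}_n(l,m)\overline{\Theta^{(r)}_n(l,m)}\big)+q^{(H)}_n(l,m)\,\Im\big((1+e^{2i\omega_0})\Theta^{(s)}_n(l,m)\overline{\Theta^{(q)}_n(l,m)}\big)\Big],$$ where $P^{\mathbf 0}_n$ is the quenched law for the environment $\omega\equiv 0$ and $\Im$ denotes imaginary part.
   Context: $U_x=\frac{1}{\sqrt2}\begin{pmatrix} e^{i\omega_x} & 1\\ 1 & -e^{-i\omega_x}\end{pmatrix}=\begin{pmatrix} a_x & b_x\\ c_x & d_x\end{pmatrix}$, $P_x=\begin{pmatrix} a_x & b_x\\ 0&0\end{pmatrix}$, $Q_x=\begin{pmatrix} 0&0\\ c_x & d_x\end{pmatrix}$, $R_0=\begin{pmatrix} c_0 & d_0\\ 0&0\end{pmatrix}$, $S_0=\begin{pmatrix} 0&0\\ a_0 & b_0\end{pmatrix}$. $\Xi_0(0,0)=I$, $\Xi_n(l,m)=0$ if $l<0$ or $m<0$, and $\Xi_{n+1}(l,m)=P_{x+1}\Xi_n(l-1,m)+Q_{x-1}\Xi_n(l,m-1)$ for $l,m\ge0$, $l+m=n+1$, $x=-l+m$.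 With $\varphi_*={}^T[1/\sqrt2,i/\sqrt2]$, $P^{\omega}_n(X_n=x)=\|\Xi_n(l,m)\varphi_*\|^2$. The quantities $\Theta^{(a)}_n(l,m)$ and $a^{(H)}_n(l,m)$ ($a\in\{p,q,r,s\}$) are defined by: for $\min\{l,m\}\ge1$, $\Theta^{(p)}_n=e^{i(\omega_{-1}+\cdots+\omega_{-(l-m-1)})}$ if $l-1>m$, $1$ if $l-1=m$, $e^{-i(\omega_0+\cdots+\omega_{m-l})}$ if $l-1<m$; $\Theta^{(q)}_n=e^{i(\omega_0+\cdots+\omega_{-(l-m)})}$ if $l>m-1$, $1$ if $l=m-1$, $e^{-i(\omega_1+\cdots+\omega_{m-l-1})}$ if $l<m-1$; $\Theta^{(r)}_n=e^{i(\omega_0+\cdots+\omega_{-(l-m-1)})}$ if $l>m$, $1$ if $l=m$, $e^{-i(\omega_1+\cdots+\omega_{m-l})}$ if $l<m$; $\Theta^{(s)}_n=e^{i(\omega_{-1}+\cdots+\omega_{-(l-m)})}$ if $l>m$, $1$ if $l=m$, $e^{-i(\omega_0+\cdots+\omega_{m-l-1})}$ if $l<m$; $p^{(H)}_n(l,m)=(1/\sqrt2)^{n-1}\sum_{\gamma=1}^{(l-1)\wedge m}(-1)^{m-\gamma}\binom{l-1}{\gamma}\binom{m-1}{\gamma-1}$, $q^{(H)}_n(l,m)=(1/\sqrt2)^{n-1}\sum_{\gamma=1}^{l\wedge(m-1)}(-1)^{m-\gamma-1}\binom{l-1}{\gamma-1}\binom{m-1}{\gamma}$, $r^{(H)}_n=s^{(H)}_n=(1/\sqrt2)^{n-1}\sum_{\gamma=1}^{l\wedge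 m}(-1)^{m-\gamma}\binom{l-1}{\gamma-1}\binom{m-1}{\gamma-1}$. For $\min\{l,m\}=0$: $q^{(H)}_n(0,n)=(-1/\sqrt2)^{n-1}$, $\Theta^{(q)}_n(0,n)=e^{-i(\omega_1+\cdots+\omega_{n-1})}$, $p^{(H)}_n(n,0)=(1/\sqrt2)^{n-1}$, $\Theta^{(p)}_n(n,0)=e^{i(\omega_{-1}+\cdots+\omega_{-(n-1)})}$, all other $a^{(H)}$ equal $0$ and all other $\Theta$ equal $1$. These satisfy $\Xi_n(l,m)=\sum_{a}\Theta^{(a)}_n a^{(H)}_n A_0$ with $A_0\in\{P_0,Q_0,R_0,S_0\}$ respectively. *)

theory Defs
  imports "HOL-Analysis.Analysis"
begin

text \<open>Environment: omega :: int => real (omega_x at site x). 2x2 complex matrices are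
  complex^2^2, vectors complex^2; index 1 = first row/component, 2 = second.\<close>

definition mat2 :: "complex \<Rightarrow> complex \<Rightarrow> complex \<Rightarrow> complex \<Rightarrow> complex^2^2" where
  "mat2 a b c d = (\<chi> i j. if i = 1 then (if j = 1 then a else b) else (if j = 1 then c else d))"

definition ua :: "(int \<Rightarrow> real) \<Rightarrow> int \<Rightarrow> complex" where
  "ua \<omega> x = exp (\<i> * complex_of_real (\<omega> x)) / complex_of_real (sqrt 2)"
definition ub :: "(int \<Rightarrow> real) \<Rightarrow> int \<Rightarrow> complex" where
  "ub \<omega> x = 1 / complex_of_real (sqrt 2)"
definition uc :: "(int \<Rightarrow> real) \<Rightarrow> int \<Rightarrow> complex" where
  "uc \<omega> x = 1 / complex_of_real (sqrt 2)"
definition ud :: "(int \<Rightarrow> real) \<Rightarrow> int \<Rightarrow> complex" where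
  "ud \<omega> x = - exp (- \<i> * complex_of_real (\<omega> x)) / complex_of_real (sqrt 2)"

definition Umat :: "(int \<Rightarrow> real) \<Rightarrow> int \<Rightarrow> complex^2^2" where
  "Umat \<omega> x = mat2 (ua \<omega> x) (ub \<omega> x) (uc \<omega> x) (ud \<omega> x)"
definition Pmat :: "(int \<Rightarrow> real) \<Rightarrow> int \<Rightarrow> complex^2^2" where
  "Pmat \<omega> x = mat2 (ua \<omega> x) (ub \<omega> x) 0 0"
definition Qmat :: "(int \<Rightarrow> real) \<Rightarrow> int \<Rightarrow> complex^2^2" where
  "Qmat \<omega> x = mat2 0 0 (uc \<omega> x) (ud \<omega> x)"

text \<open>Xi omega n l m = Xi_n(l,m); negative l or m give 0 (encoded by the guards).\<close>
fun Xi :: "(int \<Rightarrow> real) \<Rightarrow> nat \<Rightarrow> nat \<Rightarrow> nat \<Rightarrow> complex^2^2" where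
  "Xi \<omega> 0 l m = (if l = 0 \<and> m = 0 then mat 1 else 0)"
| "Xi \<omega> (Suc n) l m =
     (if l + m = Suc n then
        (let x = - int l + int m in
          (if l \<ge> 1 then Pmat \<omega> (x + 1) ** Xi \<omega> n (l - 1) m else 0)
        + (if m \<ge> 1 then Qmat \<omega> (x - 1) ** Xi \<omega> n l (m - 1) else 0))
      else 0)"

definition phi_star :: "complex^2" where
  "phi_star = (\<chi> i. if i = 1 then 1 / complex_of_real (sqrt 2) else \<i> / complex_of_real (sqrt 2))"

text \<open>prob omega n l m = P^omega_n(X_n = -l+m) with n = l+m.\<close>
definition prob :: "(int \<Rightarrow> real) \<Rightarrow> nat \<Rightarrow> nat \<Rightarrow> nat \<Rightarrow> real" where
  "prob \<omega> n l m = (norm (Xi \<omega> n l m *v phi_star))\<^sup>2"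

definition osum :: "(int \<Rightarrow> real) \<Rightarrow> int \<Rightarrow> int \<Rightarrow> real" where
  "osum \<omega> a b = (\<Sum>k\<in>{a..b}. \<omega> k)"
definition osum_neg :: "(int \<Rightarrow> real) \<Rightarrow> int \<Rightarrow> int \<Rightarrow> real" where
  "osum_neg \<omega> a b = (\<Sum>k\<in>{a..b}. \<omega> (- k))"

definition eip :: "real \<Rightarrow> complex" where
  "eip t = exp (\<i> * complex_of_real t)"

definition Theta_p :: "(int \<Rightarrow> real) \<Rightarrow> nat \<Rightarrow> nat \<Rightarrow> complex" where
  "Theta_p \<omega> l m =
    (let L = int l; M = int m in
     if min l m \<ge> 1 then
       (if L - 1 > M then eip (osum_neg \<omega> 1 (L - M - 1))
        else if L - 1 = M then 1 else eip (- osum \<omega> 0 (M - L)))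
     else if m = 0 then eip (osum_neg \<omega> 1 (int (l + m) - 1)) else 1)"

definition Theta_q :: "(int \<Rightarrow> real) \<Rightarrow> nat \<Rightarrow> nat \<Rightarrow> complex" where
  "Theta_q \<omega> l m =
    (let L = int l; M = int m in
     if min l m \<ge> 1 then
       (if L > M - 1 then eip (osum_neg \<omega> 0 (L - M))
        else if L = M - 1 then 1 else eip (- osum \<omega> 1 (M - L - 1)))
     else if l = 0 then eip (- osum \<omega> 1 (int (l + m) - 1)) else 1)"

definition Theta_r :: "(int \<Rightarrow> real) \<Rightarrow> nat \<Rightarrow> nat \<Rightarrow> complex" where
  "Theta_r \<omega> l m =
    (let L = int l; M = int m in
     if min l m \<ge> 1 then
       (if L > M then eip (osum_neg \<omega> 0 (L - M - 1))
        else if L = M then 1 else eip (- osum \<omega> 1 (M - L)))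
     else 1)"

definition Theta_s :: "(int \<Rightarrow> real) \<Rightarrow> nat \<Rightarrow> nat \<Rightarrow> complex" where
  "Theta_s \<omega> l m =
    (let L = int l; M = int m in
     if min l m \<ge> 1 then
       (if L > M then eip (osum_neg \<omega> 1 (L - M))
        else if L = M then 1 else eip (- osum \<omega> 0 (M - L - 1)))
     else 1)"

definition pH :: "nat \<Rightarrow> nat \<Rightarrow> real" where
  "pH l m =
    (if min l m \<ge> 1 then
       (1 / sqrt 2) ^ (l + m - 1) *
       (\<Sum>\<gamma>=1..min (l - 1) m. (-1) ^ (m - \<gamma>) * real ((l - 1) choose \<gamma>) * real ((m - 1) choose (\<gamma> - 1)))
     else if m = 0 then (1 / sqrt 2) ^ (l + m - 1) else 0)"

definition qH :: "nat \<Rightarrow> nat \<Rightarrow> real" where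
  "qH l m =
    (if min l m \<ge> 1 then
       (1 / sqrt 2) ^ (l + m - 1) *
       (\<Sum>\<gamma>=1..min l (m - 1). (-1) ^ (m - \<gamma> - 1) * real ((l - 1) choose (\<gamma> - 1)) * real ((m - 1) choose \<gamma>))
     else if l = 0 then (- 1 / sqrt 2) ^ (l + m - 1) else 0)"

definition rH :: "nat \<Rightarrow> nat \<Rightarrow> real" where
  "rH l m =
    (if min l m \<ge> 1 then
       (1 / sqrt 2) ^ (l + m - 1) *
       (\<Sum>\<gamma>=1..min l m. (-1) ^ (m - \<gamma>) * real ((l - 1) choose (\<gamma> - 1)) * real ((m - 1) choose (\<gamma> - 1)))
     else 0)"

end

theory Submission
  imports Defs
begin

(* The paper's decomposition
   \<Xi>_n(l,m) = \<Theta>^(p) p^(H) P_0 + \<Theta>^(q) q^(H) Q_0 + \<Theta>^(r) r^(H) R_0 + \<Theta>^(s) r^(H) S_0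
   says that \<Xi>_n(l,m) = A(l,m) ** U_0 for the amplitude matrix
   A(l,m) = [[\<Theta>^(p) p^(H), \<Theta>^(r) r^(H)], [\<Theta>^(s) r^(H), \<Theta>^(q) q^(H)]].
   We prove this by induction on n, splitting the recursion for \<Xi> into
     (1) a real part: p^(H), q^(H), r^(H) satisfy the Hadamard-walk recursions, which is
         Pascal's rule for three alternating binomial convolutions, and
     (2) a phase part: with the potential pot(k) = \<omega>_0 + ... + \<omega>_(k-1) (negated sum for
         k < 0), every \<Theta> equals exp(i(c - pot(x + e))) for constants c, e, so the phase
         exp(\<plusminus>i \<omega>) of U_(x \<plusminus> 1) only shifts the argument of pot by one.
   Then \<Xi>_n(l,m) phi_star = A(l,m) (U_0 phi_star); expanding the squared norm of this vector
   gives a closed formula for P^\<omega>_n(X_n = x) whose dependence on \<omega> is exactly the claimed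
   one, and comparing it with the case \<omega> = 0 proves the theorem. *)

lemma mat2_mult:
  "mat2 a b c d ** mat2 e f g h = mat2 (a*e + b*g) (a*f + b*h) (c*e + d*g) (c*f + d*h)"
  unfolding mat2_def matrix_matrix_mult_def by (simp add: vec_eq_iff sum_2 forall_2)

lemma mat2_add: "mat2 a b c d + mat2 e f g h = mat2 (a+e) (b+f) (c+g) (d+h)"
  unfolding mat2_def by (simp add: vec_eq_iff forall_2)

lemma mat2_mulv: "mat2 a b c d *v v = (\<chi> i. if i = 1 then a * v$1 + b * v$2 else c * v$1 + d * v$2)"
  unfolding mat2_def matrix_vector_mult_def by (simp add: vec_eq_iff sum_2 forall_2)

lemma norm_vec2_sq: "(norm (v::complex^2))\<^sup>2 = (cmod (v$1))\<^sup>2 + (cmod (v$2))\<^sup>2"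
  unfolding norm_vec_def L2_set_def by (simp add: sum_2)

(* Alternating binomial convolutions; r^(H), p^(H), q^(H) are, up to sign and a power
   of 1/\<surd>2, the three sums conv0, convA, convB. *)

definition conv0 :: "nat \<Rightarrow> nat \<Rightarrow> real" where
  "conv0 A B = (\<Sum>k=0..A. (-1)^k * real (A choose k) * real (B choose k))"
definition convA :: "nat \<Rightarrow> nat \<Rightarrow> real" where
  "convA A B = (\<Sum>k=0..A. (-1)^k * real (A choose Suc k) * real (B choose k))"
definition convB :: "nat \<Rightarrow> nat \<Rightarrow> real" where
  "convB A B = (\<Sum>k=0..A. (-1)^k * real (A choose k) * real (B choose Suc k))"

lemma conv0_upto_Suc: "conv0 A B = (\<Sum>k=0..Suc A. (-1)^k * real (A choose k) * real (B choose k))"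
  unfolding conv0_def by simp
lemma convA_upto_Suc: "convA A B = (\<Sum>k=0..Suc A. (-1)^k * real (A choose Suc k) * real (B choose k))"
  unfolding convA_def by simp

(* Pascal's rule, applied to either binomial factor. *)

lemma convA_Suc: "convA (Suc A) B = convA A B + conv0 A B"
proof -
  have "convA (Suc A) B = (\<Sum>k=0..Suc A. (-1)^k * real (A choose Suc k) * real (B choose k)
          + (-1)^k * real (A choose k) * real (B choose k))"
    unfolding convA_def by (rule sum.cong) (auto simp: algebra_simps)
  also have "\<dots> = convA A B + conv0 A B" by (simp add: sum.distrib convA_upto_Suc conv0_upto_Suc)
  finally show ?thesis .
qed

lemma convB_Suc: "convB A (Suc B) = convB A B + conv0 A B"
proof -
  have "convB A (Suc B) = (\<Sum>k=0..A. (-1)^k * real (A choose k) * real (B choose Suc k)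
          + (-1)^k * real (A choose k) * real (B choose k))"
    unfolding convB_def by (rule sum.cong) (auto simp: algebra_simps)
  also have "\<dots> = convB A B + conv0 A B" by (simp add: sum.distrib convB_def conv0_def)
  finally show ?thesis .
qed

lemma conv0_Suc_left: "conv0 (Suc A) B = conv0 A B - convB A B"
proof -
  have "conv0 (Suc A) B = 1 + (\<Sum>i=0..A. (-1)^Suc i * real (Suc A choose Suc i) * real (B choose Suc i))"
    unfolding conv0_def by (subst sum.atLeast0_atMost_Suc_shift) simp
  also have "\<dots> = 1 + (\<Sum>i=0..A. (-1)^Suc i * real (A choose Suc i) * real (B choose Suc i))
      + (\<Sum>i=0..A. (-1)^Suc i * real (A choose i) * real (B choose Suc i))"
    by (simp only: add.assoc sum.distrib[symmetric])
       (intro arg_cong[where f="(+) 1"] sum.cong refl; simp add: algebra_simps)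
  also have "(\<Sum>i=0..A. (-1)^Suc i * real (A choose i) * real (B choose Suc i)) = - convB A B"
    unfolding convB_def by (simp add: sum_negf[symmetric])
  also have "1 + (\<Sum>i=0..A. (-1)^Suc i * real (A choose Suc i) * real (B choose Suc i)) = conv0 A B"
    unfolding conv0_upto_Suc by (subst sum.atLeast0_atMost_Suc_shift) simp
  finally show ?thesis by simp
qed

lemma conv0_Suc_right: "conv0 A (Suc B) = conv0 A B - convA A B"
proof -
  have "conv0 A (Suc B) = 1 + (\<Sum>i=0..A. (-1)^Suc i * real (A choose Suc i) * real (Suc B choose Suc i))"
    unfolding conv0_upto_Suc by (subst sum.atLeast0_atMost_Suc_shift) simp
  also have "\<dots> = 1 + (\<Sum>i=0..A. (-1)^Suc i * real (A choose Suc i) * real (B choose Suc i))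
      + (\<Sum>i=0..A. (-1)^Suc i * real (A choose Suc i) * real (B choose i))"
    by (simp only: add.assoc sum.distrib[symmetric])
       (intro arg_cong[where f="(+) 1"] sum.cong refl; simp add: algebra_simps)
  also have "(\<Sum>i=0..A. (-1)^Suc i * real (A choose Suc i) * real (B choose i)) = - convA A B"
    unfolding convA_def by (simp add: sum_negf[symmetric])
  also have "1 + (\<Sum>i=0..A. (-1)^Suc i * real (A choose Suc i) * real (B choose Suc i)) = conv0 A B"
    unfolding conv0_upto_Suc by (subst sum.atLeast0_atMost_Suc_shift) simp
  finally show ?thesis by simp
qed

lemma neg_one_power_diff: assumes "k \<le> B" shows "(-1::real)^(B - k) = (-1)^B * (-1)^k"
proof -
  have "(-1::real)^B = (-1)^(B - k) * (-1)^k" using assms by (simp flip: power_add)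
  moreover have "(-1::real)^k * (-1)^k = 1" by (simp flip: power_mult_distrib)
  ultimately show ?thesis by (metis mult.assoc mult.right_neutral)
qed

(* The amplitudes expressed through the convolutions (shifting \<gamma> = k + 1). *)

lemma rH_conv: "rH (Suc A) (Suc B) = (1/sqrt 2)^(A + B + 1) * ((-1)^B * conv0 A B)"
proof -
  have "(\<Sum>\<gamma>=1..min (Suc A) (Suc B). (-1::real) ^ (Suc B - \<gamma>) * real (A choose (\<gamma> - 1)) * real (B choose (\<gamma> - 1)))
      = (\<Sum>k<min (Suc A) (Suc B). (-1) ^ (B - k) * real (A choose k) * real (B choose k))"
    by (simp add: sum.atLeast1_atMost_eq del: min_Suc_Suc)
  also have "\<dots> = (\<Sum>k=0..A. (-1)^B * ((-1) ^ k * real (A choose k) * real (B choose k)))"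
    by (rule sum.mono_neutral_cong_left) (auto simp: neg_one_power_diff)
  also have "\<dots> = (-1)^B * conv0 A B" by (simp add: conv0_def sum_distrib_left)
  finally show ?thesis unfolding rH_def by simp
qed

lemma pH_conv: "pH (Suc A) (Suc B) = (1/sqrt 2)^(A + B + 1) * ((-1)^B * convA A B)"
proof -
  have "(\<Sum>\<gamma>=1..min A (Suc B). (-1::real) ^ (Suc B - \<gamma>) * real (A choose \<gamma>) * real (B choose (\<gamma> - 1)))
      = (\<Sum>k<min A (Suc B). (-1) ^ (B - k) * real (A choose Suc k) * real (B choose k))"
    by (simp add: sum.atLeast1_atMost_eq)
  also have "\<dots> = (\<Sum>k=0..A. (-1)^B * ((-1) ^ k * real (A choose Suc k) * real (B choose k)))"
    by (rule sum.mono_neutral_cong_left) (auto simp: neg_one_power_diff)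
  also have "\<dots> = (-1)^B * convA A B" by (simp add: convA_def sum_distrib_left)
  finally show ?thesis unfolding pH_def by simp
qed

lemma qH_conv: "qH (Suc A) (Suc B) = (1/sqrt 2)^(A + B + 1) * ((-1)^Suc B * convB A B)"
proof -
  have "(\<Sum>\<gamma>=1..min (Suc A) B. (-1::real) ^ (Suc B - \<gamma> - 1) * real (A choose (\<gamma> - 1)) * real (B choose \<gamma>))
      = (\<Sum>k<min (Suc A) B. (-1) ^ (B - Suc k) * real (A choose k) * real (B choose Suc k))"
    by (simp add: sum.atLeast1_atMost_eq)
  also have "\<dots> = (\<Sum>k=0..A. (-1)^Suc B * ((-1) ^ k * real (A choose k) * real (B choose Suc k)))"
    by (rule sum.mono_neutral_cong_left) (auto simp: neg_one_power_diff Suc_le_eq)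
  also have "\<dots> = (-1)^Suc B * convB A B" by (simp add: convB_def sum_distrib_left)
  finally show ?thesis unfolding qH_def by simp
qed

lemma sqrt2_times_power: "sqrt 2 * (1/sqrt 2)^(Suc k) = (1/sqrt 2)^k"
  by (simp add: field_simps)

(* The Hadamard-walk recursions for the real amplitudes: one step to the left
   (l \<rightarrow> l+1) and one step to the right (m \<rightarrow> m+1). *)

lemma pH_rec: assumes "1 \<le> k + m" shows "sqrt 2 * pH (Suc k) m = pH k m + rH k m"
proof (cases k; cases m)
  fix A B assume k: "k = Suc A" and m: "m = Suc B"
  have "sqrt 2 * pH (Suc k) m = sqrt 2 * (1/sqrt 2)^(Suc (A + B + 1)) * ((-1)^B * (convA A B + conv0 A B))"
    using k m by (simp add: pH_conv convA_Suc)
  also have "\<dots> = (1/sqrt 2)^(A + B + 1) * ((-1)^B * (convA A B + conv0 A B))"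
    by (simp only: sqrt2_times_power)
  finally show ?thesis using k m by (simp add: pH_conv rH_conv algebra_simps)
qed (use assms in \<open>auto simp: pH_def rH_def field_simps\<close>)

lemma rH_rec_left: assumes "1 \<le> k + m" shows "sqrt 2 * rH (Suc k) m = qH k m + rH k m"
proof (cases k; cases m)
  fix B assume k: "k = 0" and m: "m = Suc B"
  have "sqrt 2 * rH (Suc k) m = sqrt 2 * (1/sqrt 2)^(Suc B) * (-1)^B"
    using k m by (simp add: rH_conv conv0_def)
  also have "\<dots> = (-1/sqrt 2)^B" by (simp only: sqrt2_times_power) (simp add: power_mult_distrib[symmetric])
  finally show ?thesis using k m by (simp add: qH_def rH_def)
next
  fix A B assume k: "k = Suc A" and m: "m = Suc B"
  have "sqrt 2 * rH (Suc k) m = sqrt 2 * (1/sqrt 2)^(Suc (A + B + 1)) * ((-1)^B * (conv0 A B - convB A B))"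
    using k m by (simp add: rH_conv conv0_Suc_left)
  also have "\<dots> = (1/sqrt 2)^(A + B + 1) * ((-1)^B * (conv0 A B - convB A B))"
    by (simp only: sqrt2_times_power)
  finally show ?thesis using k m by (simp add: qH_conv rH_conv algebra_simps)
qed (use assms in \<open>auto simp: qH_def rH_def\<close>)

lemma qH_rec: assumes "1 \<le> l + k" shows "sqrt 2 * qH l (Suc k) = rH l k - qH l k"
proof (cases l; cases k)
  fix A B assume l: "l = Suc A" and k: "k = Suc B"
  have "sqrt 2 * qH l (Suc k) = sqrt 2 * (1/sqrt 2)^(Suc (A + B + 1)) * ((-1)^B * (convB A B + conv0 A B))"
    using l k by (simp add: qH_conv convB_Suc)
  also have "\<dots> = (1/sqrt 2)^(A + B + 1) * ((-1)^B * (convB A B + conv0 A B))"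
    by (simp only: sqrt2_times_power)
  finally show ?thesis using l k by (simp add: qH_conv rH_conv algebra_simps)
qed (use assms in \<open>auto simp: qH_def rH_def field_simps\<close>)

lemma rH_rec_right: assumes "1 \<le> l + k" shows "sqrt 2 * rH l (Suc k) = pH l k - rH l k"
proof (cases l; cases k)
  fix A assume l: "l = Suc A" and k: "k = 0"
  have "conv0 A 0 = (\<Sum>i=0..A. if i = 0 then 1 else 0)"
    unfolding conv0_def by (rule sum.cong) auto
  then have "sqrt 2 * rH l (Suc k) = sqrt 2 * (1/sqrt 2)^(Suc A)"
    using l k by (simp add: rH_conv)
  also have "\<dots> = (1/sqrt 2)^A" by (simp only: sqrt2_times_power)
  finally show ?thesis using l k by (simp add: pH_def rH_def)
next
  fix A B assume l: "l = Suc A" and k: "k = Suc B"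
  have "sqrt 2 * rH l (Suc k) = sqrt 2 * (1/sqrt 2)^(Suc (A + B + 1)) * ((-1)^Suc B * (conv0 A B - convA A B))"
    using l k by (simp add: rH_conv conv0_Suc_right)
  also have "\<dots> = (1/sqrt 2)^(A + B + 1) * ((-1)^Suc B * (conv0 A B - convA A B))"
    by (simp only: sqrt2_times_power)
  finally show ?thesis using l k by (simp add: pH_conv rH_conv algebra_simps)
qed (use assms in \<open>auto simp: pH_def rH_def\<close>)

(* The potential of the environment: pot k = \<omega>_0 + ... + \<omega>_(k-1) for k \<ge> 0 and
   pot k = -(\<omega>_k + ... + \<omega>_(-1)) for k < 0, so that every interval sum is a difference
   of potentials and every phase \<Theta> is an exponential of a potential difference. *)
definition pot :: "(int \<Rightarrow> real) \<Rightarrow> int \<Rightarrow> real" where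
  "pot \<omega> k = (if 0 \<le> k then (\<Sum>j\<in>{0..<k}. \<omega> j) else - (\<Sum>j\<in>{k..<0}. \<omega> j))"

lemma pot_interval: "a \<le> b \<Longrightarrow> (\<Sum>j\<in>{a..<b}. \<omega> j) = pot \<omega> b - pot \<omega> a"
proof -
  assume "a \<le> b"
  consider "0 \<le> a" | "a < 0" "0 \<le> b" | "b < 0" by linarith
  then show ?thesis
  proof cases
    case 1
    then have "{0..<b} = {0..<a} \<union> {a..<b}" using \<open>a \<le> b\<close> by auto
    then show ?thesis using 1 \<open>a \<le> b\<close> by (simp add: pot_def sum.union_disjoint ivl_disj_int)
  next
    case 2
    then have "{a..<b} = {a..<0} \<union> {0..<b}" by auto
    then show ?thesis using 2 by (simp add: pot_def sum.union_disjoint)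
  next
    case 3
    then have "{a..<0} = {a..<b} \<union> {b..<0}" using \<open>a \<le> b\<close> by auto
    then show ?thesis using 3 \<open>a \<le> b\<close> by (simp add: pot_def sum.union_disjoint)
  qed
qed

lemma eip_zero: "eip 0 = 1"
  by (simp add: eip_def)

lemma eip_add: "eip (a + b) = eip a * eip b"
  unfolding eip_def by (simp add: distrib_left exp_add)

lemma pot_step: "pot \<omega> (k + 1) = pot \<omega> k + \<omega> k"
  using pot_interval[of k "k+1" \<omega>] by (simp add: atLeastLessThanPlusOne_atLeastAtMost_int)

lemma pot_zero: "pot \<omega> 0 = 0" by (simp add: pot_def)

lemma osum_pot: "a \<le> b + 1 \<Longrightarrow> osum \<omega> a b = pot \<omega> (b + 1) - pot \<omega> a"
  unfolding osum_def by (metis atLeastLessThanPlusOne_atLeastAtMost_int pot_interval)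

lemma osum_neg_pot: "a \<le> b + 1 \<Longrightarrow> osum_neg \<omega> a b = pot \<omega> (1 - a) - pot \<omega> (- b)"
proof -
  assume "a \<le> b + 1"
  have "osum_neg \<omega> a b = (\<Sum>j\<in>uminus ` {a..b}. \<omega> j)"
    unfolding osum_neg_def by (subst sum.reindex) (auto simp: inj_on_def)
  also have "uminus ` {a..b} = {-b..<1-a}"
    by (auto simp: image_iff intro!: bexI[where x="- _"])
  finally show ?thesis using \<open>a \<le> b + 1\<close> by (simp add: pot_interval)
qed

(* Closed forms of the phases; pot 1 = \<omega>_0 is the constant c of the outline. *)
lemma Theta_p_phase:
  "1 \<le> l \<Longrightarrow> Theta_p \<omega> l m = eip (- pot \<omega> (int m - int l + 1))"
  by (cases "m = 0"; cases "l = Suc m")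
     (auto simp: Theta_p_def Let_def osum_pot osum_neg_pot pot_zero eip_zero algebra_simps
           intro!: arg_cong[where f=eip])

lemma Theta_q_phase:
  "1 \<le> m \<Longrightarrow> Theta_q \<omega> l m = eip (pot \<omega> 1 - pot \<omega> (int m - int l))"
  by (cases "l = 0"; cases "m = Suc l")
     (auto simp: Theta_q_def Let_def osum_pot osum_neg_pot pot_zero eip_zero algebra_simps
           intro!: arg_cong[where f=eip])

lemma Theta_r_phase:
  "1 \<le> l \<Longrightarrow> 1 \<le> m \<Longrightarrow> Theta_r \<omega> l m = eip (pot \<omega> 1 - pot \<omega> (int m - int l + 1))"
  by (cases "l = m")
     (auto simp: Theta_r_def Let_def osum_pot osum_neg_pot pot_zero eip_zero algebra_simps
           intro!: arg_cong[where f=eip])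

lemma Theta_s_phase:
  "1 \<le> l \<Longrightarrow> 1 \<le> m \<Longrightarrow> Theta_s \<omega> l m = eip (- pot \<omega> (int m - int l))"
  by (cases "l = m")
     (auto simp: Theta_s_def Let_def osum_pot osum_neg_pot pot_zero eip_zero algebra_simps
           intro!: arg_cong[where f=eip])

lemma ua_shift: "ua \<omega> x * eip (c - pot \<omega> (x + 1)) = eip (c - pot \<omega> x) / complex_of_real (sqrt 2)"
proof -
  have "eip (\<omega> x) * eip (c - pot \<omega> (x + 1)) = eip (c - pot \<omega> x)"
    by (simp add: pot_step flip: eip_add)
  then show ?thesis by (simp add: ua_def eip_def)
qed

lemma ud_shift: "ud \<omega> x * eip (c - pot \<omega> x) = - eip (c - pot \<omega> (x + 1)) / complex_of_real (sqrt 2)"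
proof -
  have "eip (- \<omega> x) * eip (c - pot \<omega> x) = eip (c - pot \<omega> (x + 1))"
    unfolding pot_step by (simp add: algebra_simps flip: eip_add)
  then show ?thesis by (simp add: ud_def eip_def)
qed

definition coef_p :: "(int \<Rightarrow> real) \<Rightarrow> nat \<Rightarrow> nat \<Rightarrow> complex" where
  "coef_p \<omega> l m = Theta_p \<omega> l m * complex_of_real (pH l m)"
definition coef_q :: "(int \<Rightarrow> real) \<Rightarrow> nat \<Rightarrow> nat \<Rightarrow> complex" where
  "coef_q \<omega> l m = Theta_q \<omega> l m * complex_of_real (qH l m)"
definition coef_r :: "(int \<Rightarrow> real) \<Rightarrow> nat \<Rightarrow> nat \<Rightarrow> complex" where
  "coef_r \<omega> l m = Theta_r \<omega> l m * complex_of_real (rH l m)"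
definition coef_s :: "(int \<Rightarrow> real) \<Rightarrow> nat \<Rightarrow> nat \<Rightarrow> complex" where
  "coef_s \<omega> l m = Theta_s \<omega> l m * complex_of_real (rH l m)"

(* r^(H) vanishes on the boundary, where both \<Theta>^(r) and \<Theta>^(s) are fixed to 1. *)
lemma rH_boundary: "min l m = 0 \<Longrightarrow> rH l m = 0"
  by (simp add: rH_def)

(* Away from the origin every amplitude is a potential phase times its real amplitude;
   where the phase formula does not apply, the real amplitude vanishes. *)

lemma coef_p_phase: "1 \<le> l + m \<Longrightarrow> coef_p \<omega> l m = eip (- pot \<omega> (int m - int l + 1)) * pH l m"
  by (cases l) (auto simp: coef_p_def Theta_p_phase pH_def)

lemma coef_q_phase: "1 \<le> l + m \<Longrightarrow> coef_q \<omega> l m = eip (pot \<omega> 1 - pot \<omega> (int m - int l)) * qH l m"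
  by (cases m) (auto simp: coef_q_def Theta_q_phase qH_def)

lemma coef_r_phase: "coef_r \<omega> l m = eip (pot \<omega> 1 - pot \<omega> (int m - int l + 1)) * rH l m"
  by (cases "min l m = 0") (auto simp: coef_r_def Theta_r_phase rH_boundary)

lemma coef_s_phase: "coef_s \<omega> l m = eip (- pot \<omega> (int m - int l)) * rH l m"
  by (cases "min l m = 0") (auto simp: coef_s_def Theta_s_phase rH_boundary)

(* The recursion \<Xi>_(n+1) = P_(x+1) \<Xi>_n(l-1,m) + Q_(x-1) \<Xi>_n(l,m-1), entrywise: the first row of
   the amplitude matrix comes from a step to the left, the second from a step to the right. *)

lemma coef_p_rec: assumes "1 \<le> k + m"
  shows "coef_p \<omega> (Suc k) m = ua \<omega> (int m - int k) * coef_p \<omega> k m + ub \<omega> (int m - int k) * coef_s \<omega> k m"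
proof -
  let ?e = "eip (- pot \<omega> (int m - int k))"
  have "ua \<omega> (int m - int k) * coef_p \<omega> k m = ?e * pH k m / sqrt 2"
    using ua_shift[of \<omega> "int m - int k" 0] by (simp add: coef_p_phase[OF assms] algebra_simps)
  moreover have "ub \<omega> (int m - int k) * coef_s \<omega> k m = ?e * rH k m / sqrt 2"
    by (simp add: coef_s_phase ub_def)
  moreover have "coef_p \<omega> (Suc k) m = ?e * (pH k m + rH k m) / sqrt 2"
  proof -
    have "pH (Suc k) m = (pH k m + rH k m) / sqrt 2" using pH_rec[OF assms] by (simp add: field_simps)
    then show ?thesis by (simp add: coef_p_phase)
  qed
  ultimately show ?thesis by (simp add: add_divide_distrib distrib_left)
qed

lemma coef_r_rec: assumes "1 \<le> k + m"
  shows "coef_r \<omega> (Suc k) m = ua \<omega> (int m - int k) * coef_r \<omega> k m + ub \<omega> (int m - int k) * coef_q \<omega> k m"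
proof -
  let ?e = "eip (pot \<omega> 1 - pot \<omega> (int m - int k))"
  have "ua \<omega> (int m - int k) * coef_r \<omega> k m = ?e * rH k m / sqrt 2"
    using ua_shift[of \<omega> "int m - int k" "pot \<omega> 1"] by (simp add: coef_r_phase algebra_simps)
  moreover have "ub \<omega> (int m - int k) * coef_q \<omega> k m = ?e * qH k m / sqrt 2"
    by (simp add: coef_q_phase[OF assms] ub_def)
  moreover have "coef_r \<omega> (Suc k) m = ?e * (qH k m + rH k m) / sqrt 2"
  proof -
    have "rH (Suc k) m = (qH k m + rH k m) / sqrt 2" using rH_rec_left[OF assms] by (simp add: field_simps)
    then show ?thesis by (simp add: coef_r_phase)
  qed
  ultimately show ?thesis by (simp add: add_divide_distrib distrib_left)
qed

lemma coef_s_rec: assumes "1 \<le> l + k"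
  shows "coef_s \<omega> l (Suc k) = uc \<omega> (int k - int l) * coef_p \<omega> l k + ud \<omega> (int k - int l) * coef_s \<omega> l k"
proof -
  let ?e = "eip (- pot \<omega> (int k - int l + 1))"
  have "uc \<omega> (int k - int l) * coef_p \<omega> l k = ?e * pH l k / sqrt 2"
    by (simp add: coef_p_phase[OF assms] uc_def)
  moreover have "ud \<omega> (int k - int l) * coef_s \<omega> l k = - ?e * rH l k / sqrt 2"
    using ud_shift[of \<omega> "int k - int l" 0] by (simp add: coef_s_phase algebra_simps)
  moreover have "coef_s \<omega> l (Suc k) = ?e * (pH l k - rH l k) / sqrt 2"
  proof -
    have "rH l (Suc k) = (pH l k - rH l k) / sqrt 2" using rH_rec_right[OF assms] by (simp add: field_simps)
    then show ?thesis by (simp add: coef_s_phase add.commute add_diff_eq)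
  qed
  ultimately show ?thesis by (simp add: diff_divide_distrib right_diff_distrib)
qed

lemma coef_q_rec: assumes "1 \<le> l + k"
  shows "coef_q \<omega> l (Suc k) = uc \<omega> (int k - int l) * coef_r \<omega> l k + ud \<omega> (int k - int l) * coef_q \<omega> l k"
proof -
  let ?e = "eip (pot \<omega> 1 - pot \<omega> (int k - int l + 1))"
  have "uc \<omega> (int k - int l) * coef_r \<omega> l k = ?e * rH l k / sqrt 2"
    by (simp add: coef_r_phase uc_def)
  moreover have "ud \<omega> (int k - int l) * coef_q \<omega> l k = - ?e * qH l k / sqrt 2"
    using ud_shift[of \<omega> "int k - int l" "pot \<omega> 1"] by (simp add: coef_q_phase[OF assms] algebra_simps)
  moreover have "coef_q \<omega> l (Suc k) = ?e * (rH l k - qH l k) / sqrt 2"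
  proof -
    have "qH l (Suc k) = (rH l k - qH l k) / sqrt 2" using qH_rec[OF assms] by (simp add: field_simps)
    then show ?thesis by (simp add: coef_q_phase add.commute add_diff_eq)
  qed
  ultimately show ?thesis by (simp add: diff_divide_distrib right_diff_distrib)
qed

definition amp :: "(int \<Rightarrow> real) \<Rightarrow> nat \<Rightarrow> nat \<Rightarrow> complex^2^2" where
  "amp \<omega> l m = mat2 (coef_p \<omega> l m) (coef_r \<omega> l m) (coef_s \<omega> l m) (coef_q \<omega> l m)"

lemma Pmat_mult: "Pmat \<omega> x ** mat2 a b c d = mat2 (ua \<omega> x * a + ub \<omega> x * c) (ua \<omega> x * b + ub \<omega> x * d) 0 0"
  by (simp add: Pmat_def mat2_mult)

lemma Qmat_mult: "Qmat \<omega> x ** mat2 a b c d = mat2 0 0 (uc \<omega> x * a + ud \<omega> x * c) (uc \<omega> x * b + ud \<omega> x * d)"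
  by (simp add: Qmat_def mat2_mult)

lemma amp_first_row_left_edge: "coef_p \<omega> 0 (Suc k) = 0" "coef_r \<omega> 0 m = 0"
  by (simp_all add: coef_p_def coef_r_def pH_def rH_def)

lemma amp_second_row_right_edge: "coef_s \<omega> l 0 = 0" "coef_q \<omega> (Suc k) 0 = 0"
  by (simp_all add: coef_s_def coef_q_def qH_def rH_def)

lemma amp_step:
  assumes "2 \<le> l + m"
  shows "amp \<omega> l m = (if 1 \<le> l then Pmat \<omega> (- int l + int m + 1) ** amp \<omega> (l - 1) m else 0)
                   + (if 1 \<le> m then Qmat \<omega> (- int l + int m - 1) ** amp \<omega> l (m - 1) else 0)"
proof (cases l; cases m)
  fix k assume l: "l = 0" and m: "m = Suc k"
  then have "1 \<le> l + k" using assms by simp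
  then show ?thesis using l m
    by (simp add: amp_def Qmat_mult mat2_add amp_first_row_left_edge coef_s_rec coef_q_rec)
next
  fix k assume l: "l = Suc k" and m: "m = 0"
  then have "1 \<le> k + m" using assms by simp
  then show ?thesis using l m
    by (simp add: amp_def Pmat_mult mat2_add amp_second_row_right_edge coef_p_rec coef_r_rec)
next
  fix k j assume l: "l = Suc k" and m: "m = Suc j"
  then have "1 \<le> k + m" "1 \<le> l + j" by simp_all
  then show ?thesis using l m
    by (simp add: amp_def Pmat_mult Qmat_mult mat2_add coef_p_rec coef_r_rec coef_s_rec coef_q_rec
        algebra_simps)
qed (use assms in simp)

(* Right distributivity of the matrix product, which the library states only on the left. *)
lemma matrix_add_rdistrib: "(B + C) ** (A :: 'a::semiring_1^'n^'m) = B ** A + C ** A"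
  by (vector matrix_matrix_mult_def sum.distrib[symmetric] field_simps)

theorem Xi_amp: "1 \<le> n \<Longrightarrow> l + m = n \<Longrightarrow> Xi \<omega> n l m = amp \<omega> l m ** Umat \<omega> 0"
proof (induction n arbitrary: l m rule: nat_induct_at_least)
  case base
  then consider "l = 1" "m = 0" | "l = 0" "m = 1" by arith
  then show ?case
  proof cases
    case 1
    have "amp \<omega> l m = mat2 1 0 0 0"
      using 1 by (simp add: amp_def coef_p_def coef_q_def coef_r_def coef_s_def
                    Theta_p_def pH_def qH_def rH_def osum_neg_def eip_zero)
    then show ?thesis using 1 by (simp add: Umat_def Pmat_def mat2_mult)
  next
    case 2
    have "amp \<omega> l m = mat2 0 0 0 1"
      using 2 by (simp add: amp_def coef_p_def coef_q_def coef_r_def coef_s_def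
                    Theta_q_def pH_def qH_def rH_def osum_def eip_zero)
    then show ?thesis using 2 by (simp add: Umat_def Qmat_def mat2_mult)
  qed
next
  case (Suc n)
  have "Xi \<omega> (Suc n) l m
      = (if 1 \<le> l then Pmat \<omega> (- int l + int m + 1) ** (amp \<omega> (l - 1) m ** Umat \<omega> 0) else 0)
      + (if 1 \<le> m then Qmat \<omega> (- int l + int m - 1) ** (amp \<omega> l (m - 1) ** Umat \<omega> 0) else 0)"
    using Suc by (simp add: Let_def)
  also have "\<dots> = amp \<omega> l m ** Umat \<omega> 0"
    using Suc by (simp add: amp_step matrix_add_rdistrib matrix_mul_assoc)
  finally show ?case .
qed

definition coin_up :: "real \<Rightarrow> complex" where
  "coin_up w = (exp (\<i> * complex_of_real w) + \<i>) / 2"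
definition coin_down :: "real \<Rightarrow> complex" where
  "coin_down w = (1 - \<i> * exp (- \<i> * complex_of_real w)) / 2"

lemma Umat_phi_star: "Umat \<omega> 0 *v phi_star = (\<chi> i. if i = 1 then coin_up (\<omega> 0) else coin_down (\<omega> 0))"
proof -
  have "complex_of_real (sqrt 2) * complex_of_real (sqrt 2) = 2" by (simp flip: of_real_mult)
  then show ?thesis
    by (simp add: vec_eq_iff forall_2 Umat_def mat2_mulv phi_star_def ua_def ub_def uc_def ud_def
        coin_up_def coin_down_def field_simps)
qed

lemma prob_rows:
  assumes "1 \<le> n" "l + m = n"
  shows "prob \<omega> n l m =
           (cmod (coef_p \<omega> l m * coin_up (\<omega> 0) + coef_r \<omega> l m * coin_down (\<omega> 0)))\<^sup>2
         + (cmod (coef_s \<omega> l m * coin_up (\<omega> 0) + coef_q \<omega> l m * coin_down (\<omega> 0)))\<^sup>2"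
proof -
  have "Xi \<omega> n l m *v phi_star = amp \<omega> l m *v (Umat \<omega> 0 *v phi_star)"
    by (simp add: Xi_amp[OF assms] matrix_vector_mul_assoc)
  then show ?thesis
    by (simp add: prob_def norm_vec2_sq Umat_phi_star amp_def mat2_mulv)
qed

lemma exp_i_real: "exp (\<i> * complex_of_real w) = Complex (cos w) (sin w)"
  by (simp add: complex_eq_iff Re_exp Im_exp)

lemma coin_up_norm: "(cmod (coin_up w))\<^sup>2 = (1 + sin w) / 2"
proof -
  have "coin_up w = Complex (cos w / 2) ((sin w + 1) / 2)"
    by (simp add: coin_up_def exp_i_real complex_eq_iff)
  moreover have "(cos w / 2)\<^sup>2 + ((sin w + 1) / 2)\<^sup>2 = (1 + sin w) / 2"
    using sin_cos_squared_add[of w] by (simp add: power2_sum field_simps)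
  ultimately show ?thesis by (simp add: cmod_power2)
qed

lemma coin_down_norm: "(cmod (coin_down w))\<^sup>2 = (1 - sin w) / 2"
proof -
  have "coin_down w = Complex ((1 - sin w) / 2) (- cos w / 2)"
    using exp_i_real[of "- w"] by (simp add: coin_down_def complex_eq_iff)
  moreover have "((1 - sin w) / 2)\<^sup>2 + (- cos w / 2)\<^sup>2 = (1 - sin w) / 2"
    using sin_cos_squared_add[of w] by (simp add: power2_diff field_simps)
  ultimately show ?thesis by (simp add: cmod_power2)
qed

lemma coin_interference: "coin_up w * cnj (coin_down w) = \<i> * (1 + exp (2 * \<i> * complex_of_real w)) / 4"
proof -
  have "exp (2 * \<i> * complex_of_real w) = exp (\<i> * complex_of_real w) * exp (\<i> * complex_of_real w)"
    by (simp flip: exp_add add: mult.assoc)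
  moreover have "cnj (exp (- (\<i> * complex_of_real w))) = exp (\<i> * complex_of_real w)"
    by (simp add: exp_cnj)
  ultimately show ?thesis by (simp add: coin_up_def coin_down_def field_simps)
qed

lemma eip_unit: "cmod (eip t) = 1"
  unfolding eip_def by (rule norm_exp_i_times)

lemma Theta_unit:
  "cmod (Theta_p \<omega> l m) = 1" "cmod (Theta_q \<omega> l m) = 1"
  "cmod (Theta_r \<omega> l m) = 1" "cmod (Theta_s \<omega> l m) = 1"
  by (auto simp: Theta_p_def Theta_q_def Theta_r_def Theta_s_def Let_def eip_unit)

lemma cmod_sum_sq: "(cmod (z + w))\<^sup>2 = (cmod z)\<^sup>2 + (cmod w)\<^sup>2 + 2 * Re (z * cnj w)"
  unfolding cmod_power2 by (simp add: power2_sum algebra_simps)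

lemma norm_sq_phased_sum:
  assumes "cmod u = 1" "cmod v = 1"
  shows "(cmod (u * complex_of_real p * a + v * complex_of_real r * b))\<^sup>2
       = p\<^sup>2 * (cmod a)\<^sup>2 + r\<^sup>2 * (cmod b)\<^sup>2 + 2 * p * r * Re (u * cnj v * (a * cnj b))"
proof -
  have "Re (u * complex_of_real p * a * cnj (v * complex_of_real r * b))
      = p * r * Re (u * cnj v * (a * cnj b))"
    by (simp add: algebra_simps)
  then show ?thesis
    using assms by (simp add: cmod_sum_sq norm_mult power_mult_distrib)
qed

lemma prob_closed_form:
  assumes "1 \<le> n" "l + m = n"
  shows "prob \<omega> n l m =
           ((pH l m)\<^sup>2 + (qH l m)\<^sup>2) / 2 + (rH l m)\<^sup>2
         + 1/2 * ((pH l m)\<^sup>2 - (qH l m)\<^sup>2) * sin (\<omega> 0)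
         - rH l m / 2 *
             (pH l m * Im ((1 + exp (2 * \<i> * complex_of_real (\<omega> 0))) * Theta_p \<omega> l m * cnj (Theta_r \<omega> l m))
            + qH l m * Im ((1 + exp (2 * \<i> * complex_of_real (\<omega> 0))) * Theta_s \<omega> l m * cnj (Theta_q \<omega> l m)))"
proof -
  define E where "E = 1 + exp (2 * \<i> * complex_of_real (\<omega> 0))"
  have Re_E: "Re (z * (\<i> * E / 4)) = - Im (E * z) / 4" for z
    by (simp add: field_simps)
  show ?thesis
    unfolding prob_rows[OF assms] coef_p_def coef_q_def coef_r_def coef_s_def
      norm_sq_phased_sum[OF Theta_unit(1,3)] norm_sq_phased_sum[OF Theta_unit(4,2)]
      coin_up_norm coin_down_norm coin_interference E_def[symmetric] Re_E
    by (simp add: field_simps power2_eq_square)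
qed

lemma Theta_zero_environment:
  "Theta_p (\<lambda>_. 0) l m = 1" "Theta_q (\<lambda>_. 0) l m = 1"
  "Theta_r (\<lambda>_. 0) l m = 1" "Theta_s (\<lambda>_. 0) l m = 1"
  by (simp_all add: Theta_p_def Theta_q_def Theta_r_def Theta_s_def Let_def osum_def osum_neg_def eip_zero)

theorem mainTheorem5:
  fixes \<omega> :: "int \<Rightarrow> real" and l m n :: nat
  assumes "n = l + m"
  shows "prob \<omega> n l m =
           prob (\<lambda>_. 0) n l m
         + 1/2 * ((pH l m)\<^sup>2 - (qH l m)\<^sup>2) * sin (\<omega> 0)
         - rH l m / 2 *
             (pH l m * Im ((1 + exp (2 * \<i> * complex_of_real (\<omega> 0))) * Theta_p \<omega> l m * cnj (Theta_r \<omega> l m))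
            + qH l m * Im ((1 + exp (2 * \<i> * complex_of_real (\<omega> 0))) * Theta_s \<omega> l m * cnj (Theta_q \<omega> l m)))"
proof (cases "n = 0")
  case True  (* at time 0 nothing depends on the environment *)
  then have "l = 0" "m = 0" using assms by auto
  then show ?thesis using True by (simp add: prob_def pH_def qH_def rH_def)
next
  case False
  then have "1 \<le> n" "l + m = n" using assms by auto
  then show ?thesis
    using prob_closed_form[of n l m \<omega>] prob_closed_form[of n l m "\<lambda>_. 0"]
    by (simp add: Theta_zero_environment)
qed

end
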